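(* Let $\mathcal H$ be any class of group-aware hypotheses $\mathcal X\times\{A,B\}\to\{0,1\}$ and $\mathcal D$ any distribution over $\mathcal X\times\{A,B\}\times\{0,1\}$. Assume there is an integer $c\ge1$ such that for each group $g\in\{A,B\}$, $\Pr_{\mathcal D}[y=1\wedge x\in g]\ge\Pr_{\mathcal D}[x\in g]/c$, and that both groups have positive probability. Suppose $h^*\in\mathcal H$ minimizes $\Pr_{\mathcal D}[h(x,z)\ne y]$ over all $h\in\mathcal H$ satisfying Equal Opportunity on $\mathcal D$. Then there are constants $C>0$, $\alpha_0\in(0,1)$ depending only on $c$ such that for every $\alpha\in[0,\alpha_0]$ and every corrupted distribution $\widetilde{\mathcal D}=(1-\alpha)\mathcal D+\alpha\mathcal Q$ ($\mathcal Q$ arbitrary), a robust fair-ERM learner for the Equal Opportunity constraint returns a hypothesis $\hat h$ in the $(P,Q)$-randomized expansion $\mathcal{PQ}(\mathcal H)$ satisfying Equal Opportunity on $\widetilde{\mathcal D}$ and $$\Big|\mathbb E_{\mathcal D}[\mathbf 1(\hat h(x,z)\ne y)]-\mathbb E_{\mathcal D}[\mathbf 1(h^*(x,z)\ne y)]\Big|\le C\sqrt\alpha;$$ that is, such a hypothesis exists in $\mathcal{PQ}(\mathcal H)$.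
   Context: Equal Opportunity of a (possibly randomized) hypothesis $h$ on a distribution: $\Pr[h(x,z)=1\mid y=1,z=A]=\Pr[h(x,z)=1\mid y=1,z=B]$, probabilities also over the hypothesis's randomness. $\mathcal{PQ}(\mathcal H)$ consists of randomized hypotheses obtained from some $h\in\mathcal H$ and parameters $p_A,q_A,p_B,q_B\in[0,1]$ that on input $(x,z)$ output $h(x,z)$ with probability $1-p_z$ and otherwise an independent $\mathrm{Bernoulli}(q_z)$ bit. Errors of randomized hypotheses are expected errors. *)

theory Defs
  imports "HOL-Probability.Probability"
begin

datatype grp = A | B

type_synonym 'x sample = "'x \<times> grp \<times> bool"

(* a (possibly randomized) hypothesis is represented by the function giving,
   for each input (x,z), the probability that it outputs 1 *)
definition ind :: "('x \<times> grp \<Rightarrow> bool) \<Rightarrow> 'x \<times> grp \<Rightarrow> real" where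
  "ind h = (\<lambda>xz. if h xz then 1 else 0)"

definition PQ :: "('x \<times> grp \<Rightarrow> bool) set \<Rightarrow> ('x \<times> grp \<Rightarrow> real) set" where
  "PQ H = {(\<lambda>(x, z). (1 - p z) * ind h (x, z) + p z * q z) | h p q.
              h \<in> H \<and> (\<forall>g. 0 \<le> p g \<and> p g \<le> 1 \<and> 0 \<le> q g \<and> q g \<le> 1)}"

definition err :: "'x sample measure \<Rightarrow> ('x \<times> grp \<Rightarrow> real) \<Rightarrow> real" where
  "err M ph = (\<integral>(x, z, y). (if y then 1 - ph (x, z) else ph (x, z)) \<partial>M)"

definition tpr :: "'x sample measure \<Rightarrow> ('x \<times> grp \<Rightarrow> real) \<Rightarrow> grp \<Rightarrow> real" where
  "tpr M ph g = (\<integral>(x, z, y). (if y \<and> z = g then ph (x, z) else 0) \<partial>M)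
                / measure M {(x, z, y) \<in> space M. y \<and> z = g}"

definition equal_opportunity :: "'x sample measure \<Rightarrow> ('x \<times> grp \<Rightarrow> real) \<Rightarrow> bool" where
  "equal_opportunity M ph \<longleftrightarrow> tpr M ph A = tpr M ph B"

definition mix_measure :: "real \<Rightarrow> 'a measure \<Rightarrow> 'a measure \<Rightarrow> 'a measure" where
  "mix_measure \<alpha> D Q = measure_of (space D) (sets D)
      (\<lambda>S. ennreal (1 - \<alpha>) * emeasure D S + ennreal \<alpha> * emeasure Q S)"

end

theory Submission
  imports Defs
begin

text \<open>
  The witness is a post-processing of \<open>h\<^sup>*\<close> itself.
  Corrupting an \<open>\<alpha>\<close>-fraction of the data moves the true positive rate of \<open>h\<^sup>*\<close> on group
  \<open>g\<close> by at most \<open>2\<alpha> / Pr[y = 1, z = g]\<close>. If some group has \<open>Pr[y = 1, z = g] < \<surd>\<alpha>\<close>,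
  that group is answered entirely by a coin matching the other group's rate, which costs at
  most \<open>Pr[z = g] \<le> c \<surd>\<alpha>\<close>. Otherwise both corrupted rates lie within \<open>2\<surd>\<alpha>\<close> of the
  common rate of \<open>h\<^sup>*\<close> on the clean data, and randomising an \<open>8\<surd>\<alpha>\<close>-fraction of each group
  equalises them. Randomising a fraction \<open>p\<^sub>g\<close> of group \<open>g\<close> changes the clean error by
  at most \<open>p\<^sub>g Pr[z = g]\<close>.
\<close>

section \<open>Equalising two rates\<close>

lemma equalize_ordered_rates:
  fixes tA tB :: real
  assumes "0 \<le> tB" "tB \<le> tA" "tA \<le> 1"
  shows "\<exists>pA qA pB qB. pA \<in> {0..1} \<and> qA \<in> {0..1} \<and> pB \<in> {0..1} \<and> qB \<in> {0..1} \<and>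
           (1 - pA) * tA + pA * qA = (1 - pB) * tB + pB * qB \<and>
           pA \<le> 2 * (tA - tB) \<and> pB \<le> 2 * (tA - tB)"
proof (cases "1/2 \<le> tA")
  case True
  define p where "p = (tA - tB) / tA"
  have "tA - tB \<le> 2 * (tA - tB) * tA"
    using True assms mult_left_mono[of 1 "2 * tA" "tA - tB"] by (simp add: algebra_simps)
  then have "p \<le> 2 * (tA - tB)"
    using True unfolding p_def by (simp only: pos_divide_le_eq)
  moreover have "p \<in> {0..1}" "(1 - p) * tA = tB"
    using True assms by (auto simp: p_def field_simps)
  ultimately show ?thesis
    by (intro exI[of _ p] exI[of _ 0]) auto
next
  case False
  define p where "p = (tA - tB) / (1 - tB)"
  have "tA - tB \<le> 2 * (tA - tB) * (1 - tB)"
    using False assms mult_left_mono[of 1 "2 * (1 - tB)" "tA - tB"] by (simp add: algebra_simps)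
  then have "p \<le> 2 * (tA - tB)"
    using False assms unfolding p_def by (simp add: pos_divide_le_eq)
  moreover have "p \<in> {0..1}"
    using False assms by (auto simp: p_def field_simps)
  moreover have "p * (1 - tB) = tA - tB"
    using False assms by (simp add: p_def)
  then have "(1 - p) * tB + p = tA"
    by (simp add: algebra_simps)
  ultimately show ?thesis
    by (intro exI[of _ 0] exI[of _ 0] exI[of _ p] exI[of _ 1]) auto
qed

lemma equalize_rates:
  fixes tA tB :: real
  assumes "tA \<in> {0..1}" "tB \<in> {0..1}"
  shows "\<exists>pA qA pB qB. pA \<in> {0..1} \<and> qA \<in> {0..1} \<and> pB \<in> {0..1} \<and> qB \<in> {0..1} \<and>
           (1 - pA) * tA + pA * qA = (1 - pB) * tB + pB * qB \<and>
           pA \<le> 2 * \<bar>tA - tB\<bar> \<and> pB \<le> 2 * \<bar>tA - tB\<bar>"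
proof (cases "tB \<le> tA")
  case True
  then obtain pA qA pB qB where "pA \<in> {0..1}" "qA \<in> {0..1}" "pB \<in> {0..1}" "qB \<in> {0..1}"
      "(1 - pA) * tA + pA * qA = (1 - pB) * tB + pB * qB" "pA \<le> 2 * (tA - tB)" "pB \<le> 2 * (tA - tB)"
    using equalize_ordered_rates[of tB tA] assms by auto
  then show ?thesis
    by (intro exI[of _ pA] exI[of _ qA] exI[of _ pB] exI[of _ qB]) auto
next
  case False
  then obtain pA qA pB qB where "pA \<in> {0..1}" "qA \<in> {0..1}" "pB \<in> {0..1}" "qB \<in> {0..1}"
      "(1 - pA) * tB + pA * qA = (1 - pB) * tA + pB * qB" "pA \<le> 2 * (tB - tA)" "pB \<le> 2 * (tB - tA)"
    using equalize_ordered_rates[of tA tB] assms by auto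
  then show ?thesis
    by (intro exI[of _ pB] exI[of _ qB] exI[of _ pA] exI[of _ qA]) auto
qed

lemma equalize_group_rates_cheaply:
  fixes t b w :: "grp \<Rightarrow> real" and \<tau> \<alpha> c :: real
  assumes "0 \<le> \<alpha>" "0 \<le> c"
    and t: "\<And>g. t g \<in> {0..1}" and b: "\<And>g. 0 < b g"
    and w: "\<And>g. w g \<le> 1" "\<And>g. w g \<le> c * b g"
    and dev: "\<And>g. \<bar>t g - \<tau>\<bar> * b g \<le> 2 * \<alpha>"
  shows "\<exists>p q. (\<forall>g. p g \<in> {0..1}) \<and> (\<forall>g. q g \<in> {0..1}) \<and>
           (1 - p A) * t A + p A * q A = (1 - p B) * t B + p B * q B \<and>
           p A * w A + p B * w B \<le> (16 + c) * sqrt \<alpha>"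
proof -
  define s where "s = sqrt \<alpha>"
  have "0 \<le> s"
    using assms by (simp add: s_def)
  have thin_cost: "w g \<le> (16 + c) * s" if "b g < s" for g
    using w[of g] mult_left_mono[of "b g" s c] that \<open>0 \<le> c\<close> \<open>0 \<le> s\<close> by (simp add: algebra_simps)
  have all_01: "\<forall>g. case_grp x y g \<in> {0..1}" if "x \<in> {0..1}" "y \<in> {0..1}" for x y :: real
    using that by (simp split: grp.split)
  consider (thin_A) "b A < s" | (thin_B) "b B < s" | (thick) "s \<le> b A" "s \<le> b B"
    by linarith
  then show ?thesis
  proof cases
    case thin_A
    then show ?thesis
      using thin_cost[of A] t[of B] unfolding s_def
      by (intro exI[of _ "case_grp 1 0"] exI[of _ "case_grp (t B) 0"] conjI all_01) simp_all
  next
    case thin_B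
    then show ?thesis
      using thin_cost[of B] t[of A] unfolding s_def
      by (intro exI[of _ "case_grp 0 1"] exI[of _ "case_grp 0 (t A)"] conjI all_01) simp_all
  next
    case thick
    have close: "\<bar>t g - \<tau>\<bar> \<le> 2 * s" if "s \<le> b g" for g
    proof -
      have "2 * \<alpha> = 2 * (s * s)"
        using assms by (simp add: s_def)
      also have "\<dots> \<le> 2 * (s * b g)"
        using mult_left_mono[OF that \<open>0 \<le> s\<close>] by simp
      finally have "\<bar>t g - \<tau>\<bar> * b g \<le> 2 * s * b g"
        using dev[of g] by simp
      then show ?thesis
        using b[of g] by (simp add: mult_le_cancel_right_pos)
    qed
    have "\<bar>t A - t B\<bar> \<le> 4 * s"
      using close[of A] close[of B] thick by linarith
    obtain pA qA pB qB where pq: "pA \<in> {0..1}" "qA \<in> {0..1}" "pB \<in> {0..1}" "qB \<in> {0..1}"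
        "(1 - pA) * t A + pA * qA = (1 - pB) * t B + pB * qB"
        "pA \<le> 2 * \<bar>t A - t B\<bar>" "pB \<le> 2 * \<bar>t A - t B\<bar>"
      using equalize_rates[OF t t] by blast
    have small: "pA \<le> 8 * s" "pB \<le> 8 * s"
      using pq(6,7) \<open>\<bar>t A - t B\<bar> \<le> 4 * s\<close> by auto
    have "pA * w A \<le> pA" "pB * w B \<le> pB"
      using pq(1,3) w(1)[of A] w(1)[of B] by (simp_all add: mult_left_le)
    then have "pA * w A + pB * w B \<le> pA + pB"
      by linarith
    also have "\<dots> \<le> 16 * s + c * s"
      using small mult_nonneg_nonneg[OF \<open>0 \<le> c\<close> \<open>0 \<le> s\<close>] by linarith
    also have "\<dots> = (16 + c) * s"
      by (simp add: algebra_simps)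
    finally show ?thesis
      using pq unfolding s_def
      by (intro exI[of _ "case_grp pA pB"] exI[of _ "case_grp qA qB"] conjI all_01) simp_all
  qed
qed

lemma mixture_ratio_deviation:
  fixes a b a' b' \<alpha> :: real
  assumes "0 \<le> a" "a \<le> b" "0 < b" "0 \<le> a'" "a' \<le> b'" "b' \<le> 1" "0 \<le> \<alpha>" "\<alpha> \<le> 1/2"
  shows "\<bar>((1 - \<alpha>) * a + \<alpha> * a') / ((1 - \<alpha>) * b + \<alpha> * b') - a / b\<bar> * b \<le> 2 * \<alpha>"
proof -
  define n where "n = (1 - \<alpha>) * b + \<alpha> * b'"
  have "0 \<le> \<alpha> * b'" "(1/2) * b \<le> (1 - \<alpha>) * b"
    using assms by (auto intro: mult_right_mono)
  then have "b \<le> 2 * ((1 - \<alpha>) * b) + 2 * (\<alpha> * b')"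
    by linarith
  then have b_le: "b \<le> 2 * n"
    by (simp add: n_def distrib_left)
  then have n_pos: "0 < n"
    using assms by simp
  have cross: "\<bar>a' * b - a * b'\<bar> \<le> b"
  proof -
    have "a' * b \<le> 1 * b" "a * b' \<le> b * 1"
      using assms by (intro mult_right_mono mult_mono; simp)+
    moreover have "0 \<le> a' * b" "0 \<le> a * b'"
      using assms by simp_all
    ultimately show ?thesis
      by (simp add: abs_le_iff)
  qed
  have "(((1 - \<alpha>) * a + \<alpha> * a') / n - a / b) * b = (b * ((1 - \<alpha>) * a + \<alpha> * a') - a * n) / n"
    using n_pos assms by (simp add: field_simps)
  also have "\<dots> = \<alpha> * (a' * b - a * b') / n"
    by (simp add: n_def algebra_simps)
  finally have "\<bar>(((1 - \<alpha>) * a + \<alpha> * a') / n - a / b) * b\<bar> = \<bar>\<alpha> * (a' * b - a * b') / n\<bar>"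
    by simp
  then have "\<bar>((1 - \<alpha>) * a + \<alpha> * a') / n - a / b\<bar> * b = \<alpha> * \<bar>a' * b - a * b'\<bar> / n"
    using assms n_pos by (simp add: abs_mult)
  also have "\<dots> \<le> \<alpha> * b / n"
    using cross n_pos assms by (simp add: divide_right_mono mult_left_mono)
  also have "\<dots> \<le> 2 * \<alpha>"
  proof -
    have "\<alpha> * b \<le> \<alpha> * (2 * n)"
      using b_le assms by (intro mult_left_mono) auto
    then show ?thesis
      using n_pos by (simp add: pos_divide_le_eq mult_ac)
  qed
  finally show ?thesis
    unfolding n_def .
qed

section \<open>Outcomes of a hypothesis\<close>

instance grp :: finite
proof
  have "UNIV = {A, B}"
    using grp.exhaust by auto
  then show "finite (UNIV :: grp set)"
    by (metis finite.emptyI finite.insertI)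
qed

text \<open>
  Every quantity below depends on a sample \<open>(x, z, y)\<close> only through its outcome
  \<open>(y, z, h (x, z))\<close>, which ranges over a finite type.
\<close>

lemma measurable_outcome:
  fixes N :: "'x sample measure" and h :: "'x \<times> grp \<Rightarrow> bool"
  assumes z: "(\<lambda>(x, z, y). z) \<in> N \<rightarrow>\<^sub>M count_space UNIV"
    and y: "(\<lambda>(x, z, y). y) \<in> N \<rightarrow>\<^sub>M count_space UNIV"
    and h: "(\<lambda>(x, z, y). h (x, z)) \<in> N \<rightarrow>\<^sub>M count_space UNIV"
  shows "(\<lambda>(x, z, y). (y, z, h (x, z))) \<in> N \<rightarrow>\<^sub>M count_space UNIV"
proof (subst measurable_count_space_eq2_countable, intro conjI ballI)
  show "(\<lambda>(x, z, y). (y, z, h (x, z))) \<in> space N \<rightarrow> UNIV"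
    by simp
  fix v :: "bool \<times> grp \<times> bool"
  obtain y0 z0 b0 where v: "v = (y0, z0, b0)"
    by (cases v) auto
  have "(\<lambda>(x, z, y). (y, z, h (x, z))) -` {v} \<inter> space N =
      ((\<lambda>(x, z, y). y) -` {y0} \<inter> space N) \<inter> ((\<lambda>(x, z, y). z) -` {z0} \<inter> space N)
        \<inter> ((\<lambda>(x, z, y). h (x, z)) -` {b0} \<inter> space N)"
    by (auto simp: v)
  also have "\<dots> \<in> sets N"
    using measurable_sets[OF z, of "{z0}"] measurable_sets[OF y, of "{y0}"] measurable_sets[OF h, of "{b0}"]
    by auto
  finally show "(\<lambda>(x, z, y). (y, z, h (x, z))) -` {v} \<inter> space N \<in> sets N" .
qed

lemma borel_measurable_outcome_comp:
  fixes G :: "bool \<times> grp \<times> bool \<Rightarrow> real"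
  assumes "(\<lambda>(x, z, y). (y, z, h (x, z))) \<in> N \<rightarrow>\<^sub>M count_space UNIV"
  shows "(\<lambda>(x, z, y). G (y, z, h (x, z))) \<in> borel_measurable N"
proof -
  have "(\<lambda>(x, z, y). G (y, z, h (x, z))) = G \<circ> (\<lambda>(x, z, y). (y, z, h (x, z)))"
    by (auto simp: fun_eq_iff)
  also have "\<dots> \<in> borel_measurable N"
    using assms by (rule measurable_comp) simp
  finally show ?thesis .
qed

lemma integrable_outcome_comp:
  fixes G :: "bool \<times> grp \<times> bool \<Rightarrow> real"
  assumes "finite_measure N" and "(\<lambda>(x, z, y). (y, z, h (x, z))) \<in> N \<rightarrow>\<^sub>M count_space UNIV"
  shows "integrable N (\<lambda>(x, z, y). G (y, z, h (x, z)))"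
proof (rule finite_measure.integrable_const_bound[OF assms(1) _ borel_measurable_outcome_comp[OF assms(2)]])
  show "AE s in N. norm ((\<lambda>(x, z, y). G (y, z, h (x, z))) s) \<le> (\<Sum>v\<in>UNIV. \<bar>G v\<bar>)"
    by (intro AE_I2) (auto intro!: member_le_sum[of _ UNIV])
qed

lemma sets_outcome_preimage:
  assumes "(\<lambda>(x, z, y). (y, z, h (x, z))) \<in> N \<rightarrow>\<^sub>M count_space UNIV"
  shows "{(x, z, y) \<in> space N. \<Phi> (y, z, h (x, z))} \<in> sets N"
proof -
  have "{(x, z, y) \<in> space N. \<Phi> (y, z, h (x, z))} = (\<lambda>(x, z, y). (y, z, h (x, z))) -` {v. \<Phi> v} \<inter> space N"
    by auto
  also have "\<dots> \<in> sets N"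
    using assms by (rule measurable_sets) simp
  finally show ?thesis .
qed

lemma measure_outcome_preimage:
  assumes "finite_measure N" and "(\<lambda>(x, z, y). (y, z, h (x, z))) \<in> N \<rightarrow>\<^sub>M count_space UNIV"
  shows "measure N {(x, z, y) \<in> space N. \<Phi> (y, z, h (x, z))}
           = (\<integral>(x, z, y). (if \<Phi> (y, z, h (x, z)) then 1 else 0) \<partial>N)"
proof -
  let ?S = "{(x, z, y) \<in> space N. \<Phi> (y, z, h (x, z))}"
  have "measure N ?S = (\<integral>s. indicator ?S s \<partial>N)"
    using sets_outcome_preimage[OF assms(2)] finite_measure.emeasure_finite[OF assms(1)]
    by (simp add: top.not_eq_extremum)
  also have "\<dots> = (\<integral>(x, z, y). (if \<Phi> (y, z, h (x, z)) then 1 else 0) \<partial>N)"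
    by (intro Bochner_Integration.integral_cong) (auto simp: indicator_def split: if_split_asm)
  finally show ?thesis .
qed

section \<open>Mixture measures\<close>

lemma space_mix_measure [simp]: "space (mix_measure \<alpha> D Q) = space D"
  by (simp add: mix_measure_def sets.space_closed)

lemma sets_mix_measure [simp]: "sets (mix_measure \<alpha> D Q) = sets D"
  by (simp add: mix_measure_def sets.space_closed sets.sigma_sets_eq)

lemma emeasure_mix_measure:
  assumes "sets Q = sets D" and "S \<in> sets D"
  shows "emeasure (mix_measure \<alpha> D Q) S = ennreal (1 - \<alpha>) * emeasure D S + ennreal \<alpha> * emeasure Q S"
  unfolding mix_measure_def
proof (rule emeasure_measure_of_sigma[OF sets.sigma_algebra_axioms _ _ assms(2)])
  show "positive (sets D) (\<lambda>S. ennreal (1 - \<alpha>) * emeasure D S + ennreal \<alpha> * emeasure Q S)"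
    by (simp add: positive_def)
  show "countably_additive (sets D) (\<lambda>S. ennreal (1 - \<alpha>) * emeasure D S + ennreal \<alpha> * emeasure Q S)"
  proof (unfold countably_additive_def, intro allI impI)
    fix F :: "nat \<Rightarrow> _"
    assume F: "range F \<subseteq> sets D" "disjoint_family F" "\<Union> (range F) \<in> sets D"
    then have "range F \<subseteq> sets Q"
      using assms(1) by simp
    then show "(\<Sum>i. ennreal (1 - \<alpha>) * emeasure D (F i) + ennreal \<alpha> * emeasure Q (F i))
        = ennreal (1 - \<alpha>) * emeasure D (\<Union> (range F)) + ennreal \<alpha> * emeasure Q (\<Union> (range F))"
      using suminf_emeasure[OF F(1,2)] suminf_emeasure[of F Q] F(2)
      by (simp add: suminf_add[symmetric] ennreal_suminf_cmult)
  qed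
qed

lemma measure_mix_measure:
  assumes "finite_measure D" "finite_measure Q" "sets Q = sets D" "\<alpha> \<in> {0..1}" "S \<in> sets D"
  shows "measure (mix_measure \<alpha> D Q) S = (1 - \<alpha>) * measure D S + \<alpha> * measure Q S"
proof -
  have "emeasure (mix_measure \<alpha> D Q) S = ennreal ((1 - \<alpha>) * measure D S + \<alpha> * measure Q S)"
    using assms emeasure_mix_measure[OF assms(3,5)]
    by (simp add: finite_measure.emeasure_eq_measure ennreal_plus ennreal_mult)
  moreover have "0 \<le> (1 - \<alpha>) * measure D S + \<alpha> * measure Q S"
    using assms by simp
  ultimately show ?thesis
    by (simp add: measure_def[of "mix_measure \<alpha> D Q"])
qed

lemma prob_space_mix_measure:
  assumes "prob_space D" "prob_space Q" "sets Q = sets D" "\<alpha> \<in> {0..1}"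
  shows "prob_space (mix_measure \<alpha> D Q)"
proof (rule prob_spaceI)
  have "space Q = space D"
    using assms(3) by (rule sets_eq_imp_space_eq)
  then have "emeasure Q (space D) = 1"
    using prob_space.emeasure_space_1[OF assms(2)] by simp
  moreover have "emeasure D (space D) = 1"
    using prob_space.emeasure_space_1[OF assms(1)] .
  ultimately have "emeasure (mix_measure \<alpha> D Q) (space D) = ennreal (1 - \<alpha>) + ennreal \<alpha>"
    using emeasure_mix_measure[OF assms(3) sets.top] by simp
  also have "\<dots> = 1"
    using assms by (simp flip: ennreal_plus)
  finally show "emeasure (mix_measure \<alpha> D Q) (space (mix_measure \<alpha> D Q)) = 1"
    by simp
qed

lemma measure_mix_measure_pos:
  assumes "finite_measure D" "finite_measure Q" "sets Q = sets D" "\<alpha> \<in> {0..<1}" "S \<in> sets D"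
    and "0 < measure D S"
  shows "0 < measure (mix_measure \<alpha> D Q) S"
proof -
  have "0 < (1 - \<alpha>) * measure D S" "0 \<le> \<alpha> * measure Q S"
    using assms by simp_all
  moreover have "measure (mix_measure \<alpha> D Q) S = (1 - \<alpha>) * measure D S + \<alpha> * measure Q S"
    using assms by (intro measure_mix_measure) auto
  ultimately show ?thesis
    by linarith
qed

section \<open>Rates and errors of randomised hypotheses\<close>

lemma tpr_ind:
  assumes "finite_measure N"
    and "(\<lambda>(x, z, y). (y, z, h (x, z))) \<in> N \<rightarrow>\<^sub>M count_space UNIV"
  shows "tpr N (ind h) g = measure N {(x, z, y) \<in> space N. y \<and> z = g \<and> h (x, z)}
                           / measure N {(x, z, y) \<in> space N. y \<and> z = g}"
proof -
  have "(\<integral>(x, z, y). (if y \<and> z = g then ind h (x, z) else 0) \<partial>N)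
      = (\<integral>(x, z, y). (if y \<and> z = g \<and> h (x, z) then 1 else 0) \<partial>N)"
    by (intro Bochner_Integration.integral_cong) (auto simp: ind_def)
  also have "\<dots> = measure N {(x, z, y) \<in> space N. y \<and> z = g \<and> h (x, z)}"
    using measure_outcome_preimage[OF assms, of "\<lambda>(y, z, b). y \<and> z = g \<and> b"] by simp
  finally show ?thesis
    unfolding tpr_def by simp
qed

lemma tpr_ind_bounds:
  assumes "finite_measure N"
    and "(\<lambda>(x, z, y). (y, z, h (x, z))) \<in> N \<rightarrow>\<^sub>M count_space UNIV"
  shows "tpr N (ind h) g \<in> {0..1}"
proof -
  let ?P = "{(x, z, y) \<in> space N. y \<and> z = g}"
  have "measure N {(x, z, y) \<in> space N. y \<and> z = g \<and> h (x, z)} \<le> measure N ?P"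
    using sets_outcome_preimage[OF assms(2), of "\<lambda>(y, z, b). y \<and> z = g"]
    by (intro finite_measure.finite_measure_mono[OF assms(1)]) auto
  then show ?thesis
    unfolding tpr_ind[OF assms] by (cases "measure N ?P = 0") (simp_all add: less_le)
qed

lemma tpr_PQ:
  fixes p q :: "grp \<Rightarrow> real"
  assumes "finite_measure N"
    and "(\<lambda>(x, z, y). (y, z, h (x, z))) \<in> N \<rightarrow>\<^sub>M count_space UNIV"
    and "measure N {(x, z, y) \<in> space N. y \<and> z = g} \<noteq> 0"
  shows "tpr N (\<lambda>(x, z). (1 - p z) * ind h (x, z) + p z * q z) g = (1 - p g) * tpr N (ind h) g + p g * q g"
proof -
  let ?hit = "\<lambda>(x, z, y). if y \<and> z = g then ind h (x, z) else 0"
  let ?pos = "\<lambda>(x, z, y). if y \<and> z = g then 1 else 0 :: real"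
  have "integrable N ?hit"
    using integrable_outcome_comp[OF assms(1,2), of "\<lambda>(y, z, b). if y \<and> z = g then (if b then 1 else 0) else 0"]
    unfolding ind_def by simp
  moreover have "integrable N ?pos"
    using integrable_outcome_comp[OF assms(1,2), of "\<lambda>(y, z, b). if y \<and> z = g then 1 else 0"] by simp
  moreover have "measure N {(x, z, y) \<in> space N. y \<and> z = g} = integral\<^sup>L N ?pos"
    using measure_outcome_preimage[OF assms(1,2), of "\<lambda>(y, z, b). y \<and> z = g"] by simp
  moreover have "(\<integral>(x, z, y). (if y \<and> z = g then (\<lambda>(x, z). (1 - p z) * ind h (x, z) + p z * q z) (x, z) else 0) \<partial>N)
      = (\<integral>s. (1 - p g) * ?hit s + p g * q g * ?pos s \<partial>N)"
    by (intro Bochner_Integration.integral_cong) auto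
  ultimately have "(\<integral>(x, z, y). (if y \<and> z = g then (\<lambda>(x, z). (1 - p z) * ind h (x, z) + p z * q z) (x, z) else 0) \<partial>N)
      = (1 - p g) * integral\<^sup>L N ?hit + p g * q g * measure N {(x, z, y) \<in> space N. y \<and> z = g}"
    by simp
  then show ?thesis
    using assms(3) unfolding tpr_def by (simp add: field_simps)
qed

lemma err_PQ_deviation:
  fixes p q :: "grp \<Rightarrow> real"
  assumes "finite_measure N"
    and "(\<lambda>(x, z, y). (y, z, h (x, z))) \<in> N \<rightarrow>\<^sub>M count_space UNIV"
    and pq: "\<And>g. p g \<in> {0..1} \<and> q g \<in> {0..1}"
  shows "\<bar>err N (\<lambda>(x, z). (1 - p z) * ind h (x, z) + p z * q z) - err N (ind h)\<bar>
           \<le> p A * measure N {(x, z, y) \<in> space N. z = A} + p B * measure N {(x, z, y) \<in> space N. z = B}"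
proof -
  let ?err_PQ = "\<lambda>(x, z, y). if y then 1 - ((1 - p z) * ind h (x, z) + p z * q z)
                                 else (1 - p z) * ind h (x, z) + p z * q z"
  let ?err_h = "\<lambda>(x, z, y). if y then 1 - ind h (x, z) else ind h (x, z)"
  let ?in = "\<lambda>g (x, z, y). if z = g then 1 else 0 :: real"
  have int_PQ: "integrable N ?err_PQ"
    using integrable_outcome_comp[OF assms(1,2), of "\<lambda>(y, z, b). if y then 1 - ((1 - p z) * (if b then 1 else 0) + p z * q z)
                                                              else (1 - p z) * (if b then 1 else 0) + p z * q z"]
    unfolding ind_def by simp
  have int_h: "integrable N ?err_h"
    using integrable_outcome_comp[OF assms(1,2), of "\<lambda>(y, z, b). if y then 1 - (if b then 1 else 0) else (if b then 1 else 0)"]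
    unfolding ind_def by simp
  have int_in: "integrable N (?in g)" for g
    using integrable_outcome_comp[OF assms(1,2), of "\<lambda>(y, z, b). if z = g then 1 else 0"] by simp
  have measure_in: "measure N {(x, z, y) \<in> space N. z = g} = integral\<^sup>L N (?in g)" for g
    using measure_outcome_preimage[OF assms(1,2), of "\<lambda>(y, z, b). z = g"] by simp
  have pointwise: "\<bar>?err_PQ s - ?err_h s\<bar> \<le> p A * ?in A s + p B * ?in B s" for s
  proof -
    obtain x z y where s: "s = (x, z, y)"
      by (cases s) auto
    have "?err_PQ s - ?err_h s = (if y then - (p z * (q z - ind h (x, z))) else p z * (q z - ind h (x, z)))"
      by (simp add: s algebra_simps)
    then have "\<bar>?err_PQ s - ?err_h s\<bar> = p z * \<bar>q z - ind h (x, z)\<bar>"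
      using pq[of z] by (simp add: abs_mult)
    also have "\<dots> \<le> p z"
      using pq[of z] by (intro mult_right_le_one_le) (auto simp: ind_def)
    also have "\<dots> = p A * ?in A s + p B * ?in B s"
      by (cases z) (simp_all add: s)
    finally show ?thesis .
  qed
  have "err N (\<lambda>(x, z). (1 - p z) * ind h (x, z) + p z * q z) - err N (ind h)
      = integral\<^sup>L N ?err_PQ - integral\<^sup>L N ?err_h"
    unfolding err_def by (intro arg_cong2[where f = "(-)"] Bochner_Integration.integral_cong) auto
  also have "\<dots> = (\<integral>s. ?err_PQ s - ?err_h s \<partial>N)"
    using int_PQ int_h by (rule Bochner_Integration.integral_diff[symmetric])
  finally have err_diff: "err N (\<lambda>(x, z). (1 - p z) * ind h (x, z) + p z * q z) - err N (ind h)
      = (\<integral>s. ?err_PQ s - ?err_h s \<partial>N)" .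
  have "\<bar>\<integral>s. ?err_PQ s - ?err_h s \<partial>N\<bar> \<le> (\<integral>s. \<bar>?err_PQ s - ?err_h s\<bar> \<partial>N)"
    by (rule integral_abs_bound)
  also have "\<dots> \<le> (\<integral>s. p A * ?in A s + p B * ?in B s \<partial>N)"
  proof (rule integral_mono)
    show "integrable N (\<lambda>s. \<bar>?err_PQ s - ?err_h s\<bar>)"
      by (intro integrable_abs Bochner_Integration.integrable_diff int_PQ int_h)
    show "integrable N (\<lambda>s. p A * ?in A s + p B * ?in B s)"
      by (intro Bochner_Integration.integrable_add integrable_mult_right int_in)
  qed (rule pointwise)
  also have "\<dots> = p A * measure N {(x, z, y) \<in> space N. z = A} + p B * measure N {(x, z, y) \<in> space N. z = B}"
    using int_in by (simp add: measure_in)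
  finally show ?thesis
    unfolding err_diff .
qed

lemma tpr_mix_measure_deviation:
  assumes "prob_space D" "prob_space Q" "sets Q = sets D" "\<alpha> \<in> {0..1/2}"
    and outcome: "(\<lambda>(x, z, y). (y, z, h (x, z))) \<in> D \<rightarrow>\<^sub>M count_space UNIV"
    and pos: "0 < measure D {(x, z, y) \<in> space D. y \<and> z = g}"
  shows "\<bar>tpr (mix_measure \<alpha> D Q) (ind h) g - tpr D (ind h) g\<bar> * measure D {(x, z, y) \<in> space D. y \<and> z = g}
           \<le> 2 * \<alpha>"
proof -
  let ?M = "mix_measure \<alpha> D Q"
  let ?P = "{(x, z, y) \<in> space D. y \<and> z = g}"
  let ?E = "{(x, z, y) \<in> space D. y \<and> z = g \<and> h (x, z)}"
  have fin: "finite_measure D" "finite_measure Q" "finite_measure ?M"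
    using assms prob_space_mix_measure[of D Q \<alpha>] by (simp_all add: prob_space_def)
  have outcome_M: "(\<lambda>(x, z, y). (y, z, h (x, z))) \<in> ?M \<rightarrow>\<^sub>M count_space UNIV"
    using outcome by (subst measurable_cong_sets[OF sets_mix_measure refl])
  have sets: "?P \<in> sets D" "?E \<in> sets D"
    using sets_outcome_preimage[OF outcome, of "\<lambda>(y, z, b). y \<and> z = g"]
      sets_outcome_preimage[OF outcome, of "\<lambda>(y, z, b). y \<and> z = g \<and> b"] by simp_all
  then have "?P \<in> sets Q" "?E \<in> sets Q"
    using assms(3) by simp_all
  have bounds: "measure D ?E \<le> measure D ?P" "measure Q ?E \<le> measure Q ?P" "measure Q ?P \<le> 1"
    using sets \<open>?P \<in> sets Q\<close>
    by (auto intro: finite_measure.finite_measure_mono[OF fin(1)] finite_measure.finite_measure_mono[OF fin(2)]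
        prob_space.prob_le_1[OF assms(2)])
  have "\<alpha> \<in> {0..1}"
    using assms(4) by simp
  have "tpr ?M (ind h) g = measure ?M ?E / measure ?M ?P"
    using tpr_ind[OF fin(3) outcome_M] by simp
  also have "\<dots> = ((1 - \<alpha>) * measure D ?E + \<alpha> * measure Q ?E) / ((1 - \<alpha>) * measure D ?P + \<alpha> * measure Q ?P)"
    using measure_mix_measure[OF fin(1,2) assms(3) \<open>\<alpha> \<in> {0..1}\<close>] sets by simp
  finally have tpr_M: "tpr ?M (ind h) g
      = ((1 - \<alpha>) * measure D ?E + \<alpha> * measure Q ?E) / ((1 - \<alpha>) * measure D ?P + \<alpha> * measure Q ?P)" .
  have tpr_D: "tpr D (ind h) g = measure D ?E / measure D ?P"
    using tpr_ind[OF fin(1) outcome] .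
  show ?thesis
    unfolding tpr_M tpr_D
    by (rule mixture_ratio_deviation[OF measure_nonneg bounds(1) pos measure_nonneg bounds(2,3)])
      (use assms(4) in auto)
qed

lemma corrupted_equal_opportunity_in_PQ:
  fixes D Q :: "'x sample measure" and c :: real
  assumes D: "prob_space D" and Q: "prob_space Q" and sets_Q: "sets Q = sets D"
    and \<alpha>: "\<alpha> \<in> {0..1/2}" and c: "0 < c"
    and outcome: "(\<lambda>(x, z, y). (y, z, hstar (x, z))) \<in> D \<rightarrow>\<^sub>M count_space UNIV"
    and label_rate: "\<And>g. measure D {(x, z, y) \<in> space D. z = g} / c \<le> measure D {(x, z, y) \<in> space D. y \<and> z = g}"
    and group_pos: "\<And>g. 0 < measure D {(x, z, y) \<in> space D. z = g}"
    and "hstar \<in> H" and eo: "equal_opportunity D (ind hstar)"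
  shows "\<exists>hhat \<in> PQ H. equal_opportunity (mix_measure \<alpha> D Q) hhat \<and>
           \<bar>err D hhat - err D (ind hstar)\<bar> \<le> (16 + c) * sqrt \<alpha>"
proof -
  let ?M = "mix_measure \<alpha> D Q"
  define b where "b g = measure D {(x, z, y) \<in> space D. y \<and> z = g}" for g
  define w where "w g = measure D {(x, z, y) \<in> space D. z = g}" for g
  define t where "t g = tpr ?M (ind hstar) g" for g
  define \<tau> where "\<tau> = tpr D (ind hstar) A"
  have fin: "finite_measure D" "finite_measure Q" "finite_measure ?M"
    using D Q prob_space_mix_measure[OF D Q sets_Q] \<alpha> by (simp_all add: prob_space_def)
  have outcome_M: "(\<lambda>(x, z, y). (y, z, hstar (x, z))) \<in> ?M \<rightarrow>\<^sub>M count_space UNIV"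
    using outcome by (subst measurable_cong_sets[OF sets_mix_measure refl])
  have b_pos: "0 < b g" for g
  proof -
    have "0 < w g / c"
      using group_pos[of g] c by (simp add: w_def)
    then show ?thesis
      using label_rate[of g] unfolding b_def w_def by linarith
  qed
  have w_le_1: "w g \<le> 1" for g
    using prob_space.prob_le_1[OF D] by (simp add: w_def)
  have w_le: "w g \<le> c * b g" for g
    using label_rate[of g] c by (simp add: w_def b_def pos_divide_le_eq mult.commute)
  have t_01: "t g \<in> {0..1}" for g
    unfolding t_def by (rule tpr_ind_bounds[OF fin(3) outcome_M])
  have dev: "\<bar>t g - \<tau>\<bar> * b g \<le> 2 * \<alpha>" for g
  proof -
    have "tpr D (ind hstar) g = \<tau>"
      using eo unfolding equal_opportunity_def \<tau>_def by (cases g) simp_all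
    then show ?thesis
      using tpr_mix_measure_deviation[OF D Q sets_Q \<alpha> outcome b_pos[of g, unfolded b_def]]
      unfolding t_def b_def by simp
  qed
  have "0 \<le> \<alpha>" "0 \<le> c"
    using \<alpha> c by simp_all
  then obtain p q where p: "\<forall>g. p g \<in> {0..1}" and q: "\<forall>g. q g \<in> {0..1}"
    and equal_rates: "(1 - p A) * t A + p A * q A = (1 - p B) * t B + p B * q B"
    and cost: "p A * w A + p B * w B \<le> (16 + c) * sqrt \<alpha>"
    using equalize_group_rates_cheaply[of \<alpha> c t b w \<tau>, OF _ _ t_01 b_pos w_le_1 w_le dev] by blast
  then have pq: "\<And>g. p g \<in> {0..1} \<and> q g \<in> {0..1}"
    by blast
  define hhat where "hhat = (\<lambda>(x, z). (1 - p z) * ind hstar (x, z) + p z * q z)"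
  have "hhat \<in> PQ H"
    unfolding PQ_def hhat_def
    by (intro CollectI exI[of _ hstar] exI[of _ p] exI[of _ q]) (use \<open>hstar \<in> H\<close> pq in auto)
  moreover have "equal_opportunity ?M hhat"
  proof -
    have "tpr ?M hhat g = (1 - p g) * t g + p g * q g" for g
    proof -
      have "{(x, z, y) \<in> space D. y \<and> z = g} \<in> sets D"
        using sets_outcome_preimage[OF outcome, of "\<lambda>(y, z, b). y \<and> z = g"] by simp
      then have "0 < measure ?M {(x, z, y) \<in> space ?M. y \<and> z = g}"
        using measure_mix_measure_pos[OF fin(1,2) sets_Q _ _ b_pos[unfolded b_def]] \<alpha> by simp
      then show ?thesis
        unfolding hhat_def t_def by (intro tpr_PQ[OF fin(3) outcome_M]) simp
    qed
    then show ?thesis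
      unfolding equal_opportunity_def using equal_rates by simp
  qed
  moreover have "\<bar>err D hhat - err D (ind hstar)\<bar> \<le> p A * w A + p B * w B"
    unfolding hhat_def w_def by (rule err_PQ_deviation[OF fin(1) outcome pq])
  ultimately show ?thesis
    using cost by fastforce
qed

theorem mainTheorem7:
  fixes c :: nat
  assumes "c \<ge> 1"
  shows "\<exists>C > 0. \<exists>\<alpha>0. 0 < \<alpha>0 \<and> \<alpha>0 < 1 \<and>
    (\<forall>(H :: ('x \<times> grp \<Rightarrow> bool) set) (D :: 'x sample measure) hstar.
       prob_space D \<longrightarrow>
       (\<lambda>(x, z, y). z) \<in> D \<rightarrow>\<^sub>M count_space UNIV \<longrightarrow>
       (\<lambda>(x, z, y). y) \<in> D \<rightarrow>\<^sub>M count_space UNIV \<longrightarrow>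
       (\<forall>h \<in> H. (\<lambda>(x, z, y). h (x, z)) \<in> D \<rightarrow>\<^sub>M count_space UNIV) \<longrightarrow>
       (\<forall>g. measure D {(x, z, y) \<in> space D. y \<and> z = g}
              \<ge> measure D {(x, z, y) \<in> space D. z = g} / real c) \<longrightarrow>
       (\<forall>g. measure D {(x, z, y) \<in> space D. z = g} > 0) \<longrightarrow>
       hstar \<in> H \<longrightarrow> equal_opportunity D (ind hstar) \<longrightarrow>
       (\<forall>h \<in> H. equal_opportunity D (ind h) \<longrightarrow> err D (ind hstar) \<le> err D (ind h)) \<longrightarrow>
       (\<forall>\<alpha> \<in> {0..\<alpha>0}. \<forall>Q. prob_space Q \<longrightarrow> sets Q = sets D \<longrightarrow>
          (\<exists>hhat \<in> PQ H. equal_opportunity (mix_measure \<alpha> D Q) hhat \<and>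
             \<bar>err D hhat - err D (ind hstar)\<bar> \<le> C * sqrt \<alpha>)))"
proof (rule exI[of _ "16 + real c"], intro conjI exI[of _ "1/2 :: real"] allI impI ballI)
  fix H :: "('x \<times> grp \<Rightarrow> bool) set" and D Q :: "'x sample measure" and hstar and \<alpha> :: real
  assume D: "prob_space D"
    and z: "(\<lambda>(x, z, y). z) \<in> D \<rightarrow>\<^sub>M count_space UNIV"
    and y: "(\<lambda>(x, z, y). y) \<in> D \<rightarrow>\<^sub>M count_space UNIV"
    and H_meas: "\<forall>h \<in> H. (\<lambda>(x, z, y). h (x, z)) \<in> D \<rightarrow>\<^sub>M count_space UNIV"
    and label_rate: "\<forall>g. measure D {(x, z, y) \<in> space D. y \<and> z = g}
                         \<ge> measure D {(x, z, y) \<in> space D. z = g} / real c"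
    and group_pos: "\<forall>g. measure D {(x, z, y) \<in> space D. z = g} > 0"
    and hstar: "hstar \<in> H" and eo: "equal_opportunity D (ind hstar)"
    and \<alpha>: "\<alpha> \<in> {0..1/2}" and Q: "prob_space Q" and sets_Q: "sets Q = sets D"
  have "(\<lambda>(x, z, y). (y, z, hstar (x, z))) \<in> D \<rightarrow>\<^sub>M count_space UNIV"
    using H_meas hstar by (intro measurable_outcome[OF z y]) auto
  then show "\<exists>hhat \<in> PQ H. equal_opportunity (mix_measure \<alpha> D Q) hhat \<and>
               \<bar>err D hhat - err D (ind hstar)\<bar> \<le> (16 + real c) * sqrt \<alpha>"
    using assms label_rate group_pos
    by (intro corrupted_equal_opportunity_in_PQ[OF D Q sets_Q \<alpha> _ _ _ _ hstar eo]) auto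
qed simp_all

end
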